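(* Let $i,j,k$ be distinct integers with $1 \leq i,j,k \leq r$. For any $l \geq 1$, the graph $\mathcal{H}(V_i,V_j,V_k)$ does not contain a copy of $K_{2,2l^2+1}$ whose part of size $2$ consists of one vertex in $V_i$ and one vertex in $V_j$ and whose part of size $2l^2+1$ lies in $V_k$.
   Context: Let $r \geq 3$ and $l \geq 1$ be integers and $q$ a power of an odd prime. Let $\alpha_1, \dots, \alpha_r$ be distinct elements of $\mathbb{F}_q$, and let $m_1, \dots, m_l$ be distinct elements of $\mathbb{F}_q^* = \mathbb{F}_q\setminus\{0\}$ such that $m_s(\alpha_k - \alpha_i) \neq m_t(\alpha_k - \alpha_j)$ whenever $1 \leq s,t \leq l$ and $i,j,k$ are distinct integers in $\{1,\dots,r\}$. For $1 \leq i \leq r$ let $V_i = \mathbb{F}_q \times \mathbb{F}_q \times \{i\}$. For $x,y \in \mathbb{F}_q$, $a \in \mathbb{F}_q^*$, $s \in \{1,\dots,l\}$ let \[ e(x,y,a,m_s) = \{(x + \alpha_i m_s a,\; y + \alpha_i m_s a^2,\; i) : 1 \leq i \leq r\}. \] $\mathcal{H}$ is the $r$-uniform hypergraph with vertex set $V_1 \cup \dots \cup V_r$ and edge set $\{e(x,y,a,m_s) : x,y \in \mathbb{F}_q,\ a \in \mathbb{F}_q^*,\ 1 \leq s \leq l\}$. For $i \neq j$, $\mathcal{H}(V_i,V_j)$ is the bipartite graph with parts $V_i$ and $V_j$ in which $u \in V_i$ and $w \in V_j$ are adjacent iff $\{u,w\} \subseteq e$ for some edge $e$ of $\mathcal{H}$.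 For distinct $i,j,k$, $\mathcal{H}(V_i,V_j,V_k)$ is the graph on $V_i \cup V_j \cup V_k$ that is the union of $\mathcal{H}(V_i,V_j)$, $\mathcal{H}(V_j,V_k)$ and $\mathcal{H}(V_k,V_i)$. *)

theory Defs
  imports Main
begin

text \<open>Vertices of the hypergraph are triples (x, y, i) with x, y in the field and i the part index.
  The finite field F_q is modelled by a type 'a of class field and finite.\<close>

definition Vpart :: "nat \<Rightarrow> ('a \<times> 'a \<times> nat) set" where
  "Vpart i = {v. snd (snd v) = i}"

definition hedge :: "(nat \<Rightarrow> 'a::field) \<Rightarrow> nat \<Rightarrow> 'a \<Rightarrow> 'a \<Rightarrow> 'a \<Rightarrow> 'a \<Rightarrow> ('a \<times> 'a \<times> nat) set" where
  "hedge \<alpha> r x y a ms = {(x + \<alpha> i * ms * a, y + \<alpha> i * ms * a ^ 2, i) | i. 1 \<le> i \<and> i \<le> r}"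

definition hedges :: "(nat \<Rightarrow> 'a::field) \<Rightarrow> (nat \<Rightarrow> 'a) \<Rightarrow> nat \<Rightarrow> nat \<Rightarrow> ('a \<times> 'a \<times> nat) set set" where
  "hedges \<alpha> m r l = {hedge \<alpha> r x y a (m s) | x y a s. a \<noteq> 0 \<and> 1 \<le> s \<and> s \<le> l}"

definition bip_adj :: "(nat \<Rightarrow> 'a::field) \<Rightarrow> (nat \<Rightarrow> 'a) \<Rightarrow> nat \<Rightarrow> nat \<Rightarrow> nat \<Rightarrow> nat
    \<Rightarrow> ('a \<times> 'a \<times> nat) \<Rightarrow> ('a \<times> 'a \<times> nat) \<Rightarrow> bool" where
  "bip_adj \<alpha> m r l i j u w \<longleftrightarrow>
     ((u \<in> Vpart i \<and> w \<in> Vpart j) \<or> (u \<in> Vpart j \<and> w \<in> Vpart i)) \<and>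
     (\<exists>e \<in> hedges \<alpha> m r l. u \<in> e \<and> w \<in> e)"

definition tri_adj :: "(nat \<Rightarrow> 'a::field) \<Rightarrow> (nat \<Rightarrow> 'a) \<Rightarrow> nat \<Rightarrow> nat \<Rightarrow> nat \<Rightarrow> nat \<Rightarrow> nat
    \<Rightarrow> ('a \<times> 'a \<times> nat) \<Rightarrow> ('a \<times> 'a \<times> nat) \<Rightarrow> bool" where
  "tri_adj \<alpha> m r l i j k u w \<longleftrightarrow>
     bip_adj \<alpha> m r l i j u w \<or> bip_adj \<alpha> m r l j k u w \<or> bip_adj \<alpha> m r l k i u w"

end

theory Submission
  imports Defs
begin

text \<open>Two vertices of a common edge with slope m_s, lying in parts p and q, satisfy
  (alpha_q - alpha_p) m_s (y' - y) = (x' - x)^2. Hence a common neighbour in V_k of u in V_i and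
  w in V_j lies on one of l parabolas through u and on one of l parabolas through w. For each of
  the l^2 choices the leading coefficients of the two parabolas differ by
  (alpha_k - alpha_j) m_t - (alpha_k - alpha_i) m_s, which is nonzero by the hypothesis on the m_s,
  so the parabolas meet in at most two points and the common neighbourhood has at most 2 l^2
  vertices.\<close>

lemma card_le_2_if_no_three_distinct:
  assumes "finite S"
    and "\<And>a b c. a \<in> S \<Longrightarrow> b \<in> S \<Longrightarrow> c \<in> S \<Longrightarrow> a \<noteq> b \<Longrightarrow> a \<noteq> c \<Longrightarrow> b \<noteq> c \<Longrightarrow> False"
  shows "card S \<le> 2"
proof (rule ccontr)
  assume "\<not> card S \<le> 2"
  then have "3 \<le> card S" by simp
  then obtain T where "T \<subseteq> S" "card T = 3" by (meson obtain_subset_with_card_n)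
  then obtain a b c where "T = {a, b, c}" "a \<noteq> b" "b \<noteq> c" "a \<noteq> c"
    by (auto simp: card_3_iff)
  with \<open>T \<subseteq> S\<close> show False using assms(2)[of a b c] by auto
qed

lemma card_quadratic_roots_le_2:
  fixes A B C :: "'a::field"
  assumes "finite X" "A \<noteq> 0" "\<And>x. x \<in> X \<Longrightarrow> A * x\<^sup>2 + B * x + C = 0"
  shows "card X \<le> 2"
proof (rule card_le_2_if_no_three_distinct[OF \<open>finite X\<close>])
  fix p q s assume roots: "p \<in> X" "q \<in> X" "s \<in> X" and "p \<noteq> q" "p \<noteq> s" "q \<noteq> s"
  have sum_of_roots: "A * (p + x) + B = 0" if "x \<in> X" "x \<noteq> p" for x
  proof -
    have "(p - x) * (A * (p + x) + B) = (A * p\<^sup>2 + B * p + C) - (A * x\<^sup>2 + B * x + C)"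
      by (simp add: power2_eq_square algebra_simps)
    with that roots assms(3) show ?thesis by simp
  qed
  have "A * (q - s) = (A * (p + q) + B) - (A * (p + s) + B)"
    by (simp add: algebra_simps)
  also have "\<dots> = 0"
    using sum_of_roots roots \<open>p \<noteq> q\<close> \<open>p \<noteq> s\<close> by simp
  finally show False using \<open>A \<noteq> 0\<close> \<open>q \<noteq> s\<close> by simp
qed

lemma card_parabolas_inter_le_2:
  fixes D E x\<^sub>1 y\<^sub>1 x\<^sub>2 y\<^sub>2 :: "'a::field"
  assumes "finite W" "W \<subseteq> Vpart k" "D \<noteq> 0" "E \<noteq> D"
  shows "card {z \<in> W. D * (fst (snd z) - y\<^sub>1) = (fst z - x\<^sub>1)\<^sup>2 \<and>
                      E * (fst (snd z) - y\<^sub>2) = (fst z - x\<^sub>2)\<^sup>2} \<le> 2"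
    (is "card ?S \<le> 2")
proof -
  have "inj_on fst ?S"
  proof (rule inj_onI)
    fix z z' assume "z \<in> ?S" "z' \<in> ?S" "fst z = fst z'"
    then have "D * (fst (snd z) - y\<^sub>1) = D * (fst (snd z') - y\<^sub>1)" by simp
    with \<open>D \<noteq> 0\<close> have "fst (snd z) = fst (snd z')" by simp
    moreover have "snd (snd z) = snd (snd z')"
      using \<open>z \<in> ?S\<close> \<open>z' \<in> ?S\<close> assms(2) by (auto simp: Vpart_def)
    ultimately show "z = z'" using \<open>fst z = fst z'\<close> by (simp add: prod_eq_iff)
  qed
  then have "card ?S = card (fst ` ?S)" by (rule card_image[symmetric])
  also have "\<dots> \<le> 2"
  proof (rule card_quadratic_roots_le_2)
    show "finite (fst ` ?S)" using \<open>finite W\<close> by simp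
    show "E - D \<noteq> 0" using \<open>E \<noteq> D\<close> by simp
  next
    fix x assume "x \<in> fst ` ?S"
    then obtain y where D_eq: "D * (y - y\<^sub>1) = (x - x\<^sub>1)\<^sup>2" and E_eq: "E * (y - y\<^sub>2) = (x - x\<^sub>2)\<^sup>2"
      by auto
    \<comment> \<open>eliminating y from the two parabola equations\<close>
    have "E * (x - x\<^sub>1)\<^sup>2 - D * (x - x\<^sub>2)\<^sup>2 = D * E * (y\<^sub>2 - y\<^sub>1)"
      unfolding D_eq[symmetric] E_eq[symmetric] by (simp add: algebra_simps)
    then show "(E - D) * x\<^sup>2 + (2 * D * x\<^sub>2 - 2 * E * x\<^sub>1) * x
               + (E * x\<^sub>1\<^sup>2 - D * x\<^sub>2\<^sup>2 - D * E * (y\<^sub>2 - y\<^sub>1)) = 0"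
      by (simp add: power2_eq_square algebra_simps)
  qed
  finally show ?thesis .
qed

lemma common_hedge_parabola:
  assumes "e \<in> hedges \<alpha> m r l" "u \<in> e" "z \<in> e" "u \<in> Vpart p" "z \<in> Vpart q"
  shows "\<exists>s\<in>{1..l}. (\<alpha> q - \<alpha> p) * m s * (fst (snd z) - fst (snd u)) = (fst z - fst u)\<^sup>2"
proof -
  obtain x y a s where "1 \<le> s" "s \<le> l" and e: "e = hedge \<alpha> r x y a (m s)"
    using assms(1) unfolding hedges_def by blast
  with assms(2-5) have
    "u = (x + \<alpha> p * m s * a, y + \<alpha> p * m s * a\<^sup>2, p)"
    "z = (x + \<alpha> q * m s * a, y + \<alpha> q * m s * a\<^sup>2, q)"
    by (auto simp: hedge_def Vpart_def)
  then have "(\<alpha> q - \<alpha> p) * m s * (fst (snd z) - fst (snd u)) = (fst z - fst u)\<^sup>2"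
    by (simp add: power2_eq_square algebra_simps)
  with \<open>1 \<le> s\<close> \<open>s \<le> l\<close> show ?thesis by auto
qed

lemma tri_adj_common_hedge:
  assumes "tri_adj \<alpha> m r l i j k v z"
  shows "\<exists>e \<in> hedges \<alpha> m r l. v \<in> e \<and> z \<in> e"
  using assms unfolding tri_adj_def bip_adj_def by blast

lemma common_neighbour_on_parabolas:
  assumes "u \<in> Vpart i" "w \<in> Vpart j" "z \<in> Vpart k"
    and "tri_adj \<alpha> m r l i j k u z" "tri_adj \<alpha> m r l i j k w z"
  shows "\<exists>s\<in>{1..l}. \<exists>t\<in>{1..l}.
    (\<alpha> k - \<alpha> i) * m s * (fst (snd z) - fst (snd u)) = (fst z - fst u)\<^sup>2 \<and>
    (\<alpha> k - \<alpha> j) * m t * (fst (snd z) - fst (snd w)) = (fst z - fst w)\<^sup>2"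
  using tri_adj_common_hedge[OF assms(4)] tri_adj_common_hedge[OF assms(5)]
    common_hedge_parabola[OF _ _ _ assms(1) assms(3)] common_hedge_parabola[OF _ _ _ assms(2) assms(3)]
  by meson

lemma card_le_mult_if_covered:
  assumes "finite I" "finite W" "W \<subseteq> (\<Union>p\<in>I. S p)" "\<And>p. p \<in> I \<Longrightarrow> card (W \<inter> S p) \<le> c"
  shows "card W \<le> c * card I"
proof -
  have "W = (\<Union>p\<in>I. W \<inter> S p)" using assms(3) by blast
  then have "card W \<le> (\<Sum>p\<in>I. card (W \<inter> S p))"
    by (metis card_UN_le \<open>finite I\<close>)
  also have "\<dots> \<le> (\<Sum>p\<in>I. c)" using assms(4) by (rule sum_mono)
  finally show ?thesis by (simp add: mult.commute)
qed

theorem lemma3p9: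
  fixes \<alpha> m :: "nat \<Rightarrow> 'a::{field, finite}" and r l i j k :: nat
  assumes odd_q: "odd (card (UNIV :: 'a set))"
    and r3: "r \<ge> 3" and l1: "l \<ge> 1"
    and alpha_inj: "inj_on \<alpha> {1..r}"
    and m_inj: "inj_on m {1..l}"
    and m_nz: "\<And>s. s \<in> {1..l} \<Longrightarrow> m s \<noteq> 0"
    and m_cond: "\<And>s t a b c. s \<in> {1..l} \<Longrightarrow> t \<in> {1..l} \<Longrightarrow>
        a \<in> {1..r} \<Longrightarrow> b \<in> {1..r} \<Longrightarrow> c \<in> {1..r} \<Longrightarrow> a \<noteq> b \<Longrightarrow> a \<noteq> c \<Longrightarrow> b \<noteq> c \<Longrightarrow>
        m s * (\<alpha> c - \<alpha> a) \<noteq> m t * (\<alpha> c - \<alpha> b)"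
    and ijk: "i \<in> {1..r}" "j \<in> {1..r}" "k \<in> {1..r}" "i \<noteq> j" "i \<noteq> k" "j \<noteq> k"
  shows "\<not> (\<exists>u w W. u \<in> Vpart i \<and> w \<in> Vpart j \<and> W \<subseteq> Vpart k \<and>
              card W = 2 * l ^ 2 + 1 \<and>
              (\<forall>z \<in> W. tri_adj \<alpha> m r l i j k u z \<and> tri_adj \<alpha> m r l i j k w z))"
proof
  assume "\<exists>u w W. u \<in> Vpart i \<and> w \<in> Vpart j \<and> W \<subseteq> Vpart k \<and> card W = 2 * l ^ 2 + 1 \<and>
              (\<forall>z \<in> W. tri_adj \<alpha> m r l i j k u z \<and> tri_adj \<alpha> m r l i j k w z)"
  then obtain u w W where u: "u \<in> Vpart i" and w: "w \<in> Vpart j" and W: "W \<subseteq> Vpart k"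
    and card_W: "card W = 2 * l ^ 2 + 1"
    and adj: "\<forall>z \<in> W. tri_adj \<alpha> m r l i j k u z \<and> tri_adj \<alpha> m r l i j k w z" by blast
  define parabolas :: "nat \<times> nat \<Rightarrow> ('a \<times> 'a \<times> nat) set" where "parabolas = (\<lambda>(s, t).
    {z. (\<alpha> k - \<alpha> i) * m s * (fst (snd z) - fst (snd u)) = (fst z - fst u)\<^sup>2 \<and>
        (\<alpha> k - \<alpha> j) * m t * (fst (snd z) - fst (snd w)) = (fst z - fst w)\<^sup>2})"
  have "finite W" using card_W by (intro card_ge_0_finite) simp
  have "card W \<le> 2 * card ({1..l} \<times> {1..l})"
  proof (rule card_le_mult_if_covered[OF _ \<open>finite W\<close>])
    show "finite ({1..l} \<times> {1..l})" by simp
    show "W \<subseteq> (\<Union>p\<in>{1..l} \<times> {1..l}. parabolas p)"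
    proof
      fix z assume "z \<in> W"
      then obtain s t where "s \<in> {1..l}" "t \<in> {1..l}" "z \<in> parabolas (s, t)"
        using common_neighbour_on_parabolas[OF u w, of z] adj W unfolding parabolas_def by blast
      then show "z \<in> (\<Union>p\<in>{1..l} \<times> {1..l}. parabolas p)" by blast
    qed
  next
    fix p assume "p \<in> {1..l} \<times> {1..l}"
    then obtain s t where p: "p = (s, t)" "s \<in> {1..l}" "t \<in> {1..l}" by blast
    have "\<alpha> k \<noteq> \<alpha> i" using alpha_inj ijk unfolding inj_on_def by metis
    then have "(\<alpha> k - \<alpha> i) * m s \<noteq> 0" using m_nz p by simp
    moreover have "(\<alpha> k - \<alpha> j) * m t \<noteq> (\<alpha> k - \<alpha> i) * m s"
      using m_cond[of s t i j k] p ijk by (simp add: mult.commute)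
    ultimately have "card {z \<in> W. z \<in> parabolas p} \<le> 2"
      unfolding p parabolas_def using card_parabolas_inter_le_2[OF \<open>finite W\<close> W] by simp
    then show "card (W \<inter> parabolas p) \<le> 2" by (simp add: Int_def)
  qed
  then show False using card_W by (simp add: power2_eq_square)
qed

end
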